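(* Consider two-level PFASST for a linear problem with Gauss–Radau nodes as described in the context, with preconditioning using the LU trick, and assume $\mathbf{A}$ and $\tilde{\mathbf{A}}$ are invertible. For $k\in\mathbb{N}$ smoothing steps let $\mathbf{T}_{\mathrm{PFASST}}(\mu,k)=\big(\mathbf{T}_S(\mu)\big)^k\,\mathbf{T}_{\mathrm{CGC}}(\mu)$. Then PFASST converges if $\mu$ is large enough and at least $M$ smoothing steps are performed: for every $k\ge M$ there exist a fixed value $\mu^*_\infty>0$ and a constant $c>0$ independent of $\mu$ (but depending on $k$) such that for all $\mu>\mu^*_\infty$, $$\rho\big(\mathbf{T}_{\mathrm{PFASST}}(\mu,k)\big)\le\frac{c}{\mu}.$$
   Context: Fix positive integers $L$ (time steps), $M$ (collocation nodes), $N$ (spatial degrees of freedom). Let $0<\tau_1<\dots<\tau_M=1$ be the (right) Gauss–Radau nodes on $[0,1]$, $\ell_j$ the Lagrange basis polynomials, $\mathbf{Q}=(q_{m,j})$ with $q_{m,j}=\int_0^{\tau_m}\ell_j(s)\,ds$. LU trick: $\mathbf{Q}^T=\mathbf{L}_Q\mathbf{U}_Q$ with $\mathbf{L}_Q$ unit lower triangular, $\mathbf{U}_Q$ upper triangular, and $\mathbf{Q}_\Delta=\mathbf{U}_Q^T$; on the coarse level, with $\tilde M\le M$ coarse Gauss–Radau nodes and corresponding collocation matrix $\tilde{\mathbf{Q}}$, analogously $\tilde{\mathbf{Q}}_\Delta$ is obtained from the LU decomposition of $\tilde{\mathbf{Q}}^T$. Let $\mathbf{A}\in\mathbb{C}^{N\times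 N}$, $\tilde{\mathbf{A}}\in\mathbb{C}^{\tilde N\times\tilde N}$ ($\tilde N\le N$), $\mu>0$. Let $\mathbf{N}_M$ ($M\times M$) and $\tilde{\mathbf{N}}_{\tilde M}$ ($\tilde M\times\tilde M$) have ones in their last column and zeros elsewhere, $\mathbf{H}=\mathbf{N}_M\otimes\mathbf{I}_N$, $\tilde{\mathbf{H}}=\tilde{\mathbf{N}}_{\tilde M}\otimes\mathbf{I}_{\tilde N}$, $\mathbf{E}\in\mathbb{R}^{L\times L}$ with ones on the first subdiagonal and zeros elsewhere. $\mathbf{C}=\mathbf{I}_{LMN}-\mu\,\mathbf{I}_L\otimes\mathbf{Q}\otimes\mathbf{A}-\mathbf{E}\otimes\mathbf{H}$, $\hat{\mathbf{P}}=\mathbf{I}_{LMN}-\mu\,\mathbf{I}_L\otimes\mathbf{Q}_\Delta\otimes\mathbf{A}$, $\tilde{\mathbf{P}}=\mathbf{I}_{L\tilde M\tilde N}-\mu\,\mathbf{I}_L\otimes\tilde{\mathbf{Q}}_\Delta\otimes\tilde{\mathbf{A}}-\mathbf{E}\otimes\tilde{\mathbf{H}}$, both assumed invertible. Restriction $\mathbf{T}_F^C=\mathbf{I}_L\otimes\mathbf{T}_{F,Q}^C\otimes\mathbf{T}_{F,A}^C\in\mathbb{R}^{L\tilde M\tilde N\times LMN}$ and interpolation $\mathbf{T}_C^F=\mathbf{I}_L\otimes\mathbf{T}_{C,Q}^F\otimes\mathbf{T}_{C,A}^F\in\mathbb{R}^{LMN\times L\tilde M\tilde N}$, with $(\mathbf{E}\otimes\tilde{\mathbf{H}})\mathbf{T}_F^C=\mathbf{T}_F^C(\mathbf{E}\otimes\mathbf{H})$.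 $\mathbf{T}_S(\mu)=\mathbf{I}_{LMN}-\hat{\mathbf{P}}^{-1}\mathbf{C}$ and $\mathbf{T}_{\mathrm{CGC}}(\mu)=\mathbf{I}_{LMN}-\mathbf{T}_C^F\tilde{\mathbf{P}}^{-1}\mathbf{T}_F^C\mathbf{C}$. $\rho$ is the spectral radius. *)

theory Defs
  imports "HOL-Analysis.Analysis" "Jordan_Normal_Form.Spectral_Radius"
begin

definition kron :: "'a :: times mat \<Rightarrow> 'a mat \<Rightarrow> 'a mat" where
  "kron A B = mat (dim_row A * dim_row B) (dim_col A * dim_col B)
     (\<lambda>(i,j). A $$ (i div dim_row B, j div dim_col B) * B $$ (i mod dim_row B, j mod dim_col B))"

(* right Gauss--Radau nodes on [0,1], indexed 0..M-1 (tau_{m+1} in the paper is tau m here):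
   increasing nodes in (0,1] with last node 1 and an M-point quadrature rule on them
   that is exact for all polynomials of degree <= 2M-2 *)
definition right_radau_nodes :: "nat \<Rightarrow> (nat \<Rightarrow> real) \<Rightarrow> bool" where
  "right_radau_nodes M \<tau> \<longleftrightarrow> 0 < M \<and> 0 < \<tau> 0 \<and> (\<forall>i. Suc i < M \<longrightarrow> \<tau> i < \<tau> (Suc i)) \<and> \<tau> (M - 1) = 1 \<and>
     (\<exists>w :: nat \<Rightarrow> real. \<forall>p :: real poly. degree p \<le> 2 * M - 2 \<longrightarrow>
        (\<Sum>j<M. w j * poly p (\<tau> j)) = integral {0..1} (poly p))"

definition lagrange_basis :: "nat \<Rightarrow> (nat \<Rightarrow> real) \<Rightarrow> nat \<Rightarrow> real \<Rightarrow> real" where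
  "lagrange_basis M \<tau> j s = (\<Prod>i\<in>{..<M} - {j}. (s - \<tau> i) / (\<tau> j - \<tau> i))"

definition coll_matrix :: "nat \<Rightarrow> (nat \<Rightarrow> real) \<Rightarrow> complex mat" where
  "coll_matrix M \<tau> = mat M M (\<lambda>(m,j). complex_of_real (integral {0..\<tau> m} (lagrange_basis M \<tau> j)))"

definition unit_lower_triangular :: "'a :: {zero,one} mat \<Rightarrow> bool" where
  "unit_lower_triangular X \<longleftrightarrow> (\<forall>i j. i < dim_row X \<longrightarrow> j < dim_col X \<longrightarrow>
       (i < j \<longrightarrow> X $$ (i,j) = 0) \<and> (i = j \<longrightarrow> X $$ (i,j) = 1))"

(* Q_Delta from the LU trick: Q^T = L_Q U_Q, L_Q unit lower triangular, U_Q upper triangular,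
   Q_Delta = U_Q^T *)
definition LU_trick :: "complex mat \<Rightarrow> complex mat \<Rightarrow> bool" where
  "LU_trick Q QD \<longleftrightarrow> QD \<in> carrier_mat (dim_row Q) (dim_row Q) \<and> upper_triangular (transpose_mat QD) \<and>
     (\<exists>LQ \<in> carrier_mat (dim_row Q) (dim_row Q). unit_lower_triangular LQ \<and>
        transpose_mat Q = LQ * transpose_mat QD)"

definition last_col_ones :: "nat \<Rightarrow> complex mat" where
  "last_col_ones M = mat M M (\<lambda>(i,j). if j = M - 1 then 1 else 0)"

definition subdiag :: "nat \<Rightarrow> complex mat" where
  "subdiag L = mat L L (\<lambda>(i,j). if i = Suc j then 1 else 0)"

definition mat_inv :: "complex mat \<Rightarrow> complex mat" where
  "mat_inv P = (SOME B. inverts_mat P B \<and> inverts_mat B P)"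

definition real_mat :: "real mat \<Rightarrow> complex mat" where
  "real_mat X = map_mat complex_of_real X"

end

theory Submission
  imports Defs
begin

text \<open>
  Write \<open>P\<^sub>h = I - \<mu> D\<close> with \<open>D = I \<otimes> Q\<^sub>\<Delta> \<otimes> A\<close> and \<open>C = I - \<mu> D\<^sub>Q - F\<close>
  with \<open>D\<^sub>Q = I \<otimes> Q \<otimes> A\<close>. Since \<open>\<mu> P\<^sub>h\<^sup>-\<^sup>1 \<rightarrow> -D\<^sup>-\<^sup>1\<close>, the smoother
  \<open>T\<^sub>S = I - P\<^sub>h\<^sup>-\<^sup>1 C\<close> equals \<open>X + E\<close> with \<open>X = I - D\<^sup>-\<^sup>1 D\<^sub>Q\<close> and \<open>E = O(1/\<mu>)\<close>.
  The LU trick makes \<open>Q\<^sub>\<Delta>\<^sup>-\<^sup>1 Q = L\<^sub>Q\<^sup>T\<close> unit upper triangular, so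
  \<open>X = I \<otimes> (I - L\<^sub>Q\<^sup>T) \<otimes> I\<close> is strictly upper triangular in the collocation index and
  \<open>X\<^sup>M = 0\<close>. Hence \<open>T\<^sub>S\<^sup>k = (X + E)\<^sup>k - X\<^sup>k = O(1/\<mu>)\<close> for \<open>k \<ge> M\<close>, while \<open>T\<^sub>C\<^sub>G\<^sub>C\<close>
  stays bounded because \<open>\<mu> P\<^sub>c\<^sup>-\<^sup>1\<close> does. All bounds are taken in the entrywise
  \<open>\<ell>\<^sub>1\<close> norm, which is submultiplicative and dominates the spectral radius.
  That \<open>Q\<close> (and with it \<open>Q\<^sub>\<Delta>\<close>) is invertible holds for any distinct positive nodes:
  if \<open>Q c = 0\<close>, the polynomial \<open>\<Sum>\<^sub>j c\<^sub>j \<integral>\<^sub>0\<^sup>x \<ell>\<^sub>j\<close> of degree \<open>\<le> M\<close> has the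
  \<open>M + 1\<close> roots \<open>0, \<tau>\<^sub>1, \<dots>, \<tau>\<^sub>M\<close>, so it vanishes and \<open>c\<^sub>j\<close> is its derivative at \<open>\<tau>\<^sub>j\<close>.
\<close>

definition entrywise_norm :: "complex mat \<Rightarrow> real" where
  "entrywise_norm A = (\<Sum>i<dim_row A. \<Sum>j<dim_col A. cmod (A $$ (i,j)))"

lemma entrywise_norm_nonneg: "0 \<le> entrywise_norm A"
  unfolding entrywise_norm_def by (intro sum_nonneg) auto

lemma entrywise_norm_mult_le:
  assumes A: "A \<in> carrier_mat n m" and B: "B \<in> carrier_mat m p"
  shows "entrywise_norm (A * B) \<le> entrywise_norm A * entrywise_norm B"
proof -
  have "entrywise_norm (A * B) = (\<Sum>i<n. \<Sum>j<p. cmod (\<Sum>k<m. A $$ (i,k) * B $$ (k,j)))"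
    unfolding entrywise_norm_def using A B
    by (intro sum.cong refl) (auto simp: scalar_prod_def atLeast0LessThan)
  also have "\<dots> \<le> (\<Sum>i<n. \<Sum>j<p. \<Sum>k<m. cmod (A $$ (i,k)) * cmod (B $$ (k,j)))"
    by (intro sum_mono, rule order.trans[OF norm_sum], simp add: norm_mult)
  also have "\<dots> \<le> (\<Sum>i<n. \<Sum>k<m. \<Sum>l<m. \<Sum>j<p. cmod (A $$ (i,k)) * cmod (B $$ (l,j)))"
  proof (intro sum_mono)
    fix i
    have "(\<Sum>j<p. \<Sum>k<m. cmod (A $$ (i,k)) * cmod (B $$ (k,j)))
        = (\<Sum>k<m. \<Sum>j<p. cmod (A $$ (i,k)) * cmod (B $$ (k,j)))" by (rule sum.swap)
    also have "\<dots> \<le> (\<Sum>k<m. \<Sum>l<m. \<Sum>j<p. cmod (A $$ (i,k)) * cmod (B $$ (l,j)))"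
    proof (intro sum_mono)
      fix k assume "k \<in> {..<m}"
      thus "(\<Sum>j<p. cmod (A $$ (i,k)) * cmod (B $$ (k,j)))
          \<le> (\<Sum>l<m. \<Sum>j<p. cmod (A $$ (i,k)) * cmod (B $$ (l,j)))"
        by (intro member_le_sum[where f = "\<lambda>l. \<Sum>j<p. cmod (A $$ (i,k)) * cmod (B $$ (l,j))"])
          (auto intro!: sum_nonneg)
    qed
    finally show "(\<Sum>j<p. \<Sum>k<m. cmod (A $$ (i,k)) * cmod (B $$ (k,j)))
        \<le> (\<Sum>k<m. \<Sum>l<m. \<Sum>j<p. cmod (A $$ (i,k)) * cmod (B $$ (l,j)))" .
  qed
  also have "\<dots> = (\<Sum>i<n. \<Sum>k<m. cmod (A $$ (i,k)) * (\<Sum>l<m. \<Sum>j<p. cmod (B $$ (l,j))))"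
    by (simp add: sum_distrib_left)
  also have "\<dots> = entrywise_norm A * entrywise_norm B"
    unfolding entrywise_norm_def using A B by (simp add: sum_distrib_right carrier_matD)
  finally show ?thesis .
qed

lemma entrywise_norm_add_le:
  assumes A: "A \<in> carrier_mat n m" and B: "B \<in> carrier_mat n m"
  shows "entrywise_norm (A + B) \<le> entrywise_norm A + entrywise_norm B"
proof -
  have "entrywise_norm (A + B) = (\<Sum>i<n. \<Sum>j<m. cmod (A $$ (i,j) + B $$ (i,j)))"
    unfolding entrywise_norm_def using A B by (intro sum.cong refl) auto
  also have "\<dots> \<le> (\<Sum>i<n. \<Sum>j<m. cmod (A $$ (i,j)) + cmod (B $$ (i,j)))"
    by (intro sum_mono norm_triangle_ineq)
  also have "\<dots> = entrywise_norm A + entrywise_norm B"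
    unfolding entrywise_norm_def using A B by (simp add: sum.distrib carrier_matD)
  finally show ?thesis .
qed

lemma entrywise_norm_diff_le:
  assumes A: "A \<in> carrier_mat n m" and B: "B \<in> carrier_mat n m"
  shows "entrywise_norm (A - B) \<le> entrywise_norm A + entrywise_norm B"
proof -
  have "entrywise_norm (A - B) = (\<Sum>i<n. \<Sum>j<m. cmod (A $$ (i,j) - B $$ (i,j)))"
    unfolding entrywise_norm_def using A B by (intro sum.cong refl) auto
  also have "\<dots> \<le> (\<Sum>i<n. \<Sum>j<m. cmod (A $$ (i,j)) + cmod (B $$ (i,j)))"
    by (intro sum_mono norm_triangle_ineq4)
  also have "\<dots> = entrywise_norm A + entrywise_norm B"
    unfolding entrywise_norm_def using A B by (simp add: sum.distrib carrier_matD)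
  finally show ?thesis .
qed

lemma entrywise_norm_smult: "entrywise_norm (c \<cdot>\<^sub>m A) = cmod c * entrywise_norm A"
  unfolding entrywise_norm_def by (simp add: sum_distrib_left norm_mult)

lemma entrywise_norm_one: "entrywise_norm (1\<^sub>m n) = real n"
proof -
  have "entrywise_norm (1\<^sub>m n) = (\<Sum>i<n. \<Sum>j<n. if i = j then 1 else 0)"
    unfolding entrywise_norm_def by (intro sum.cong refl) auto
  also have "\<dots> = real n" by (simp add: sum.delta)
  finally show ?thesis .
qed

lemma entrywise_norm_zero: "entrywise_norm (0\<^sub>m n m) = 0"
  unfolding entrywise_norm_def by simp

text \<open>Evaluate the eigenvalue equation at a component of maximal modulus.\<close>

lemma spectral_radius_le_entrywise_norm:
  assumes A: "A \<in> carrier_mat n n" and n: "0 < n"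
  shows "spectral_radius A \<le> entrywise_norm A"
proof -
  from spectral_radius_mem_max(1)[OF A n] obtain z where
    ev: "z \<in> spectrum A" and sr: "spectral_radius A = cmod z" by auto
  from ev obtain v where "eigenvector A v z" unfolding spectrum_def eigenvalue_def by auto
  hence v: "v \<in> carrier_vec n" "v \<noteq> 0\<^sub>v n" and Av: "A *\<^sub>v v = z \<cdot>\<^sub>v v"
    unfolding eigenvector_def using A by auto
  from v obtain j0 where j0: "j0 < n" "v $ j0 \<noteq> 0" by (auto simp: vec_eq_iff)
  define S where "S = (\<lambda>j. cmod (v $ j)) ` {..<n}"
  have S: "finite S" "S \<noteq> {}" unfolding S_def using n by auto
  obtain i where i: "i < n" "cmod (v $ i) = Max S"
    using Max_in[OF S] unfolding S_def by auto
  have le_max: "cmod (v $ j) \<le> Max S" if "j < n" for j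
    by (rule Max_ge[OF S(1)]) (use that in \<open>auto simp: S_def\<close>)
  have "0 < cmod (v $ j0)" using j0(2) by simp
  hence max_pos: "0 < Max S" using le_max[OF j0(1)] by linarith
  have "z * v $ i = (A *\<^sub>v v) $ i" using Av i v by simp
  also have "\<dots> = (\<Sum>j<n. A $$ (i,j) * v $ j)" using A v i
    by (simp add: scalar_prod_def atLeast0LessThan)
  finally have row_i: "z * v $ i = (\<Sum>j<n. A $$ (i,j) * v $ j)" .
  have "cmod z * Max S = cmod (z * v $ i)" using i by (simp add: norm_mult)
  also have "\<dots> \<le> (\<Sum>j<n. cmod (A $$ (i,j)) * cmod (v $ j))" unfolding row_i
    by (rule order.trans[OF norm_sum]) (simp add: norm_mult)
  also have "\<dots> \<le> (\<Sum>j<n. cmod (A $$ (i,j)) * Max S)"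
    by (intro sum_mono mult_left_mono le_max) auto
  also have "\<dots> \<le> entrywise_norm A * Max S"
  proof -
    have "(\<Sum>j<n. cmod (A $$ (i,j))) \<le> (\<Sum>i'<n. \<Sum>j<n. cmod (A $$ (i',j)))"
      by (rule member_le_sum[where f = "\<lambda>i. \<Sum>j<n. cmod (A $$ (i,j))"])
        (use i in \<open>auto intro: sum_nonneg\<close>)
    also have "\<dots> = entrywise_norm A" using A by (simp add: entrywise_norm_def carrier_matD)
    finally have "(\<Sum>j<n. cmod (A $$ (i,j))) * Max S \<le> entrywise_norm A * Max S"
      using max_pos by simp
    thus ?thesis by (simp add: sum_distrib_right)
  qed
  finally show ?thesis using max_pos sr by simp
qed

lemma entrywise_norm_power_le:
  assumes X: "X \<in> carrier_mat n n" and XB: "entrywise_norm X \<le> B"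
  shows "entrywise_norm (X ^\<^sub>m k) \<le> real n * B ^ k"
proof (induction k)
  case 0
  show ?case using X by (simp add: entrywise_norm_one)
next
  case (Suc k)
  have "entrywise_norm (X ^\<^sub>m Suc k) = entrywise_norm (X ^\<^sub>m k * X)" by simp
  also have "\<dots> \<le> entrywise_norm (X ^\<^sub>m k) * entrywise_norm X"
    by (rule entrywise_norm_mult_le[of _ n n _ n]) (use X in auto)
  also have "\<dots> \<le> (real n * B ^ k) * B"
    using Suc XB entrywise_norm_nonneg[of "X ^\<^sub>m k"] entrywise_norm_nonneg[of X]
    by (intro mult_mono) auto
  finally show ?case by (simp add: ac_simps)
qed

lemma mult_add_diff_mult_eq:
  fixes P R X E :: "'a :: comm_ring_1 mat"
  assumes "P \<in> carrier_mat n n" "R \<in> carrier_mat n n" "X \<in> carrier_mat n n" "E \<in> carrier_mat n n"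
  shows "P * (X + E) - R * X = (P - R) * (X + E) + R * E"
proof -
  have "(P - R) * (X + E) = P * (X + E) - R * (X + E)"
    by (rule minus_mult_distrib_mat) (use assms in auto)
  moreover have "R * (X + E) = R * X + R * E"
    by (rule mult_add_distrib_mat) (use assms in auto)
  ultimately have "(P - R) * (X + E) + R * E = (P * (X + E) - (R * X + R * E)) + R * E"
    by simp
  also have "\<dots> = P * (X + E) - R * X"
    by (rule eq_matI) (use assms in \<open>simp_all del: index_mult_mat(1)\<close>)
  finally show ?thesis by simp
qed

lemma entrywise_norm_power_perturb_le:
  assumes X: "X \<in> carrier_mat n n" and E: "E \<in> carrier_mat n n"
    and Ee: "entrywise_norm E \<le> e" and B1: "1 \<le> B" and XB: "entrywise_norm X + e \<le> B"
  shows "entrywise_norm ((X + E) ^\<^sub>m k - X ^\<^sub>m k) \<le> real k * real n * B ^ k * e"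
proof (induction k)
  case 0
  have "(X + E) ^\<^sub>m 0 - X ^\<^sub>m 0 = 0\<^sub>m n n" using X E by (intro eq_matI) auto
  thus ?case by (simp add: entrywise_norm_zero)
next
  case (Suc k)
  have e0: "0 \<le> e" using Ee entrywise_norm_nonneg[of E] by linarith
  have XB': "entrywise_norm X \<le> B" using XB e0 by linarith
  have XE: "X + E \<in> carrier_mat n n" using X E by simp
  have XEB: "entrywise_norm (X + E) \<le> B" using entrywise_norm_add_le[OF X E] Ee XB by linarith
  have P: "(X + E) ^\<^sub>m k \<in> carrier_mat n n" using XE by simp
  have R: "X ^\<^sub>m k \<in> carrier_mat n n" using X by simp
  let ?\<Delta> = "(X + E) ^\<^sub>m k - X ^\<^sub>m k"
  have \<Delta>: "?\<Delta> \<in> carrier_mat n n" using P R by (meson minus_carrier_mat)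
  have step: "(X + E) ^\<^sub>m Suc k - X ^\<^sub>m Suc k = ?\<Delta> * (X + E) + X ^\<^sub>m k * E"
    using mult_add_diff_mult_eq[OF P R X E] by simp
  have "entrywise_norm ((X + E) ^\<^sub>m Suc k - X ^\<^sub>m Suc k)
      \<le> entrywise_norm (?\<Delta> * (X + E)) + entrywise_norm (X ^\<^sub>m k * E)"
  proof -
    have "?\<Delta> * (X + E) \<in> carrier_mat n n" using \<Delta> XE by (meson mult_carrier_mat)
    moreover have "X ^\<^sub>m k * E \<in> carrier_mat n n" using R E by auto
    ultimately show ?thesis unfolding step by (rule entrywise_norm_add_le)
  qed
  also have "entrywise_norm (?\<Delta> * (X + E)) \<le> entrywise_norm ?\<Delta> * entrywise_norm (X + E)"
    by (rule entrywise_norm_mult_le[OF \<Delta> XE])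
  also have "\<dots> \<le> (real k * real n * B ^ k * e) * B"
    by (intro mult_mono Suc XEB entrywise_norm_nonneg)
      (use entrywise_norm_nonneg Suc in \<open>auto intro: order.trans\<close>)
  also have "entrywise_norm (X ^\<^sub>m k * E) \<le> entrywise_norm (X ^\<^sub>m k) * entrywise_norm E"
    by (rule entrywise_norm_mult_le[OF R E])
  also have "\<dots> \<le> (real n * B ^ k) * e"
    by (intro mult_mono entrywise_norm_power_le[OF X XB'] Ee entrywise_norm_nonneg) (use B1 in simp)
  also have "(real n * B ^ k) * e \<le> real n * B ^ Suc k * e"
    using B1 e0 by (intro mult_right_mono mult_left_mono) (auto simp: power_increasing)
  finally show ?case by (simp add: algebra_simps)
qed

lemma sum_lessThan_mult_split:
  fixes h :: "nat \<Rightarrow> 'a :: comm_monoid_add"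
  shows "(\<Sum>k<b * d. h k) = (\<Sum>p<b. \<Sum>q<d. h (p * d + q))"
proof -
  have "(\<Sum>k<b * d. h k) = (\<Sum>p<b. sum h {p * d..<p * d + d})" by (rule sum.nat_group[symmetric])
  also have "\<dots> = (\<Sum>p<b. \<Sum>q<d. h (p * d + q))"
  proof (rule sum.cong[OF refl])
    fix p
    have "sum h {p * d..<p * d + d} = sum h {0 + p * d..<d + p * d}" by (simp add: add.commute)
    also have "\<dots> = (\<Sum>q\<in>{0..<d}. h (q + p * d))" by (rule sum.shift_bounds_nat_ivl)
    finally show "sum h {p * d..<p * d + d} = (\<Sum>q<d. h (p * d + q))"
      by (simp add: atLeast0LessThan add.commute)
  qed
  finally show ?thesis .
qed

lemma dim_kron [simp]:
  "dim_row (kron A B) = dim_row A * dim_row B" "dim_col (kron A B) = dim_col A * dim_col B"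
  unfolding kron_def by auto

lemma kron_carrier_mat:
  "A \<in> carrier_mat a b \<Longrightarrow> B \<in> carrier_mat c d \<Longrightarrow> kron A B \<in> carrier_mat (a * c) (b * d)"
  unfolding carrier_mat_def by simp

lemma index_kron:
  "i < dim_row A * dim_row B \<Longrightarrow> j < dim_col A * dim_col B \<Longrightarrow>
   kron A B $$ (i,j) = A $$ (i div dim_row B, j div dim_col B) * B $$ (i mod dim_row B, j mod dim_col B)"
  unfolding kron_def by simp

lemma kron_mult_kron:
  fixes A B C D :: "'a :: comm_semiring_1 mat"
  assumes A: "A \<in> carrier_mat a b" and B: "B \<in> carrier_mat c d"
    and C: "C \<in> carrier_mat b e" and D: "D \<in> carrier_mat d f"
    and c: "0 < c" and d: "0 < d" and f: "0 < f"
  shows "kron A B * kron C D = kron (A * C) (B * D)"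
proof (rule eq_matI)
  show "dim_row (kron A B * kron C D) = dim_row (kron (A * C) (B * D))" using A B by simp
  show "dim_col (kron A B * kron C D) = dim_col (kron (A * C) (B * D))" using C D by simp
  fix i j assume "i < dim_row (kron (A * C) (B * D))" and "j < dim_col (kron (A * C) (B * D))"
  hence i: "i < a * c" and j: "j < e * f" using A B C D by auto
  have "(kron A B * kron C D) $$ (i,j) = (\<Sum>k<b * d. kron A B $$ (i,k) * kron C D $$ (k,j))"
    using i j A B C D by (simp add: scalar_prod_def atLeast0LessThan)
  also have "\<dots> = (\<Sum>p<b. \<Sum>q<d. kron A B $$ (i, p * d + q) * kron C D $$ (p * d + q, j))"
    by (rule sum_lessThan_mult_split)
  also have "\<dots> = (\<Sum>p<b. \<Sum>q<d. (A $$ (i div c, p) * C $$ (p, j div f)) * (B $$ (i mod c, q) * D $$ (q, j mod f)))"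
  proof (intro sum.cong refl)
    fix p q assume p: "p \<in> {..<b}" and q: "q \<in> {..<d}"
    have "p * d + q < Suc p * d" using q by simp
    also have "\<dots> \<le> b * d" using p by (intro mult_right_mono) auto
    finally have k: "p * d + q < b * d" .
    have "(p * d + q) div d = p" "(p * d + q) mod d = q" using q d by auto
    thus "kron A B $$ (i, p * d + q) * kron C D $$ (p * d + q, j)
        = (A $$ (i div c, p) * C $$ (p, j div f)) * (B $$ (i mod c, q) * D $$ (q, j mod f))"
      using i j k q A B C D by (simp add: index_kron) (simp add: ac_simps)
  qed
  also have "\<dots> = (\<Sum>p<b. A $$ (i div c, p) * C $$ (p, j div f)) * (\<Sum>q<d. B $$ (i mod c, q) * D $$ (q, j mod f))"
    by (simp add: sum_product)
  also have "\<dots> = kron (A * C) (B * D) $$ (i,j)"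
    using i j A B C D c f
    by (simp add: index_kron scalar_prod_def atLeast0LessThan less_mult_imp_div_less)
  finally show "(kron A B * kron C D) $$ (i,j) = kron (A * C) (B * D) $$ (i,j)" .
qed

lemma kron_one_one:
  assumes "0 < b"
  shows "kron (1\<^sub>m a) (1\<^sub>m b) = (1\<^sub>m (a * b) :: 'a :: semiring_1 mat)"
proof (rule eq_matI)
  fix i j assume "i < dim_row (1\<^sub>m (a * b) :: 'a mat)" and "j < dim_col (1\<^sub>m (a * b) :: 'a mat)"
  hence i: "i < a * b" and j: "j < a * b" by auto
  have "i div b < a" "j div b < a" using i j by (auto simp: less_mult_imp_div_less)
  moreover have "(i = j) = (i div b = j div b \<and> i mod b = j mod b)"
    by (metis div_mult_mod_eq)
  ultimately show "kron (1\<^sub>m a) (1\<^sub>m b) $$ (i,j) = (1\<^sub>m (a * b) :: 'a mat) $$ (i,j)"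
    using i j assms by (auto simp: index_kron)
qed auto

definition poly_antiderivative :: "real poly \<Rightarrow> real poly" where
  "poly_antiderivative q = (\<Sum>k\<le>degree q. monom (coeff q k / of_nat (Suc k)) (Suc k))"

lemma pderiv_poly_antiderivative: "pderiv (poly_antiderivative q) = q"
proof -
  have "pderiv (poly_antiderivative q) = (\<Sum>k\<le>degree q. monom (coeff q k) k)"
    unfolding poly_antiderivative_def pderiv_sum pderiv_monom
    by (intro sum.cong refl) (simp del: of_nat_Suc)
  also have "\<dots> = q" by (rule poly_as_sum_of_monoms)
  finally show ?thesis .
qed

lemma poly_antiderivative_at_0: "poly (poly_antiderivative q) 0 = 0"
  unfolding poly_antiderivative_def by (simp add: poly_sum poly_monom)

lemma degree_poly_antiderivative_le: "degree (poly_antiderivative q) \<le> Suc (degree q)"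
  unfolding poly_antiderivative_def
  by (intro degree_sum_le) (auto intro: order.trans[OF degree_monom_le])

lemma integral_poly_eq_antiderivative:
  assumes "0 \<le> t"
  shows "integral {0..t} (poly q) = poly (poly_antiderivative q) t"
proof -
  have "(poly q has_integral poly (poly_antiderivative q) t - poly (poly_antiderivative q) 0) {0..t}"
  proof (rule fundamental_theorem_of_calculus[OF assms])
    fix x :: real
    have "(poly (poly_antiderivative q) has_real_derivative poly (pderiv (poly_antiderivative q)) x)
        (at x within {0..t})"
      by (rule DERIV_subset[OF poly_DERIV]) auto
    thus "(poly (poly_antiderivative q) has_vector_derivative poly q x) (at x within {0..t})"
      by (simp add: pderiv_poly_antiderivative has_real_derivative_iff_has_vector_derivative)
  qed
  thus ?thesis by (simp add: integral_unique poly_antiderivative_at_0)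
qed

locale increasing_nodes =
  fixes M :: nat and \<tau> :: "nat \<Rightarrow> real"
  assumes M_pos: "0 < M" and first_pos: "0 < \<tau> 0"
    and increasing: "\<And>i. Suc i < M \<Longrightarrow> \<tau> i < \<tau> (Suc i)"
begin

lemma node_less: "i < j \<Longrightarrow> j < M \<Longrightarrow> \<tau> i < \<tau> j"
proof (induction j)
  case (Suc j)
  show ?case
  proof (cases "i = j")
    case False
    hence "\<tau> i < \<tau> j" using Suc by auto
    also have "\<tau> j < \<tau> (Suc j)" using increasing Suc by auto
    finally show ?thesis .
  qed (use increasing Suc in auto)
qed simp

lemma node_pos: "i < M \<Longrightarrow> 0 < \<tau> i"
  using node_less[of 0 i] first_pos by (cases i) auto

lemma inj_on_nodes: "inj_on \<tau> {..<M}"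
  using node_less by (auto simp: inj_on_def) (metis linorder_neqE_nat less_irrefl)

lemma lagrange_basis_at_node:
  assumes "i < M" "j < M"
  shows "lagrange_basis M \<tau> i (\<tau> j) = (if i = j then 1 else 0)"
proof (cases "i = j")
  case True
  have "lagrange_basis M \<tau> i (\<tau> i) = (\<Prod>k\<in>{..<M} - {i}. 1)"
    unfolding lagrange_basis_def
    by (intro prod.cong refl) (use inj_on_nodes assms in \<open>auto dest: inj_onD\<close>)
  thus ?thesis using True by simp
next
  case False
  have "lagrange_basis M \<tau> i (\<tau> j) = 0"
    unfolding lagrange_basis_def by (rule prod_zero) (use False assms in auto)
  thus ?thesis using False by simp
qed

definition lagrange_poly :: "nat \<Rightarrow> real poly" where
  "lagrange_poly i = (\<Prod>k\<in>{..<M} - {i}. Polynomial.smult (1 / (\<tau> i - \<tau> k)) [:- \<tau> k, 1:])"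

lemma poly_lagrange_poly: "poly (lagrange_poly i) = lagrange_basis M \<tau> i"
  unfolding lagrange_poly_def lagrange_basis_def
  by (rule ext) (simp add: poly_prod diff_divide_distrib)

lemma degree_lagrange_poly_le:
  assumes "i < M"
  shows "degree (lagrange_poly i) \<le> M - 1"
proof -
  have "degree (lagrange_poly i)
      \<le> sum (degree \<circ> (\<lambda>k. Polynomial.smult (1 / (\<tau> i - \<tau> k)) [:- \<tau> k, 1:])) ({..<M} - {i})"
    unfolding lagrange_poly_def by (rule degree_prod_sum_le) auto
  also have "\<dots> \<le> (\<Sum>k\<in>{..<M} - {i}. 1)"
    by (intro sum_mono) (simp add: degree_smult_le)
  also have "\<dots> = M - 1" using assms by simp
  finally show ?thesis .
qed

lemma integrated_lagrange_combination_eq_0: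
  assumes h: "\<And>m. m < M \<Longrightarrow> (\<Sum>j<M. integral {0..\<tau> m} (lagrange_basis M \<tau> j) * c j) = 0"
    and j: "j < M"
  shows "c j = 0"
proof -
  define p where "p = (\<Sum>j<M. Polynomial.smult (c j) (lagrange_poly j))"
  define P where "P = (\<Sum>j<M. Polynomial.smult (c j) (poly_antiderivative (lagrange_poly j)))"
  have degP: "degree P \<le> M" unfolding P_def
  proof (intro degree_sum_le)
    fix j assume "j \<in> {..<M}"
    hence "degree (poly_antiderivative (lagrange_poly j)) \<le> M"
      using degree_poly_antiderivative_le[of "lagrange_poly j"] degree_lagrange_poly_le[of j] M_pos
      by auto
    thus "degree (Polynomial.smult (c j) (poly_antiderivative (lagrange_poly j))) \<le> M"
      by (rule order.trans[OF degree_smult_le])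
  qed auto
  have P_0: "poly P 0 = 0" unfolding P_def by (simp add: poly_sum poly_antiderivative_at_0)
  have P_node: "poly P (\<tau> m) = 0" if m: "m < M" for m
  proof -
    have "poly P (\<tau> m) = (\<Sum>j<M. integral {0..\<tau> m} (lagrange_basis M \<tau> j) * c j)"
      unfolding P_def poly_sum
      by (intro sum.cong refl)
        (use node_pos[OF m] in \<open>simp add: integral_poly_eq_antiderivative poly_lagrange_poly[symmetric]\<close>)
    thus ?thesis using h[OF m] by simp
  qed
  have "P = 0"
  proof (rule ccontr)
    assume "P \<noteq> 0"
    have "0 \<notin> \<tau> ` {..<M}" using node_pos by force
    hence "Suc M = card (insert 0 (\<tau> ` {..<M}))"
      using inj_on_nodes by (simp add: card_image)
    also have "\<dots> \<le> card {x. poly P x = 0}"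
      using P_0 P_node by (intro card_mono poly_roots_finite[OF \<open>P \<noteq> 0\<close>]) auto
    also have "\<dots> \<le> degree P" by (rule poly_roots_degree[OF \<open>P \<noteq> 0\<close>])
    finally show False using degP by simp
  qed
  moreover have "pderiv P = p"
    unfolding P_def p_def by (simp add: pderiv_sum pderiv_smult pderiv_poly_antiderivative)
  ultimately have "p = 0" by simp
  have "poly p (\<tau> j) = (\<Sum>i<M. c i * lagrange_basis M \<tau> i (\<tau> j))"
    unfolding p_def by (simp add: poly_sum poly_lagrange_poly)
  also have "\<dots> = c j"
    using j by (simp add: lagrange_basis_at_node if_distrib cong: if_cong)
  finally show "c j = 0" using \<open>p = 0\<close> by simp
qed

lemma det_coll_matrix_nonzero: "det (coll_matrix M \<tau>) \<noteq> 0"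
proof
  have Q: "coll_matrix M \<tau> \<in> carrier_mat M M" unfolding coll_matrix_def by simp
  assume "det (coll_matrix M \<tau>) = 0"
  then obtain v where v: "v \<in> carrier_vec M" "v \<noteq> 0\<^sub>v M" "coll_matrix M \<tau> *\<^sub>v v = 0\<^sub>v M"
    using det_0_iff_vec_prod_zero[OF Q] by auto
  have Qv: "(\<Sum>j<M. complex_of_real (integral {0..\<tau> m} (lagrange_basis M \<tau> j)) * v $ j) = 0"
    if m: "m < M" for m
  proof -
    have "(coll_matrix M \<tau> *\<^sub>v v) $ m = 0" using v(3) m by simp
    thus ?thesis using m v(1) by (simp add: coll_matrix_def scalar_prod_def atLeast0LessThan)
  qed
  have "Re (v $ j) = 0" if "j < M" for j
    by (rule integrated_lagrange_combination_eq_0[OF _ that])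
      (use arg_cong[where f = Re, OF Qv] in \<open>simp add: Re_sum\<close>)
  moreover have "Im (v $ j) = 0" if "j < M" for j
    by (rule integrated_lagrange_combination_eq_0[OF _ that])
      (use arg_cong[where f = Im, OF Qv] in \<open>simp add: Im_sum\<close>)
  ultimately have "v = 0\<^sub>v M" using v(1) by (intro eq_vecI) (auto simp: complex_eq_iff)
  with v(2) show False by simp
qed

end

lemma right_radau_nodes_increasing: "right_radau_nodes M \<tau> \<Longrightarrow> increasing_nodes M \<tau>"
  unfolding right_radau_nodes_def increasing_nodes_def by auto

lemma LU_trick_carrier_mat: "LU_trick (coll_matrix M \<tau>) QD \<Longrightarrow> QD \<in> carrier_mat M M"
  unfolding LU_trick_def coll_matrix_def by auto

lemma det_nonzero_imp_left_inverse:
  fixes A :: "'a :: field mat"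
  assumes A: "A \<in> carrier_mat n n" and "det A \<noteq> 0"
  obtains B where "B \<in> carrier_mat n n" "B * A = 1\<^sub>m n"
proof -
  have "A \<in> Units (ring_mat TYPE('a) n ())" by (rule det_non_zero_imp_unit[OF assms])
  thus ?thesis using that unfolding Units_def ring_mat_def by auto
qed

text \<open>From \<open>Q\<^sup>T = L\<^sub>Q Q\<^sub>\<Delta>\<^sup>T\<close> we get \<open>Q = Q\<^sub>\<Delta> L\<^sub>Q\<^sup>T\<close>, and \<open>Q\<^sub>\<Delta>\<close> inherits invertibility from \<open>Q\<close>.\<close>

lemma LU_trick_left_inverse:
  assumes nodes: "increasing_nodes M \<tau>" and LU: "LU_trick (coll_matrix M \<tau>) QD"
  obtains QDi LQ where "QDi \<in> carrier_mat M M" "LQ \<in> carrier_mat M M" "QDi * QD = 1\<^sub>m M"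
    "QDi * coll_matrix M \<tau> = transpose_mat LQ" "unit_lower_triangular LQ"
proof -
  let ?Q = "coll_matrix M \<tau>"
  have Q: "?Q \<in> carrier_mat M M" unfolding coll_matrix_def by simp
  from LU obtain LQ where QD: "QD \<in> carrier_mat M M" and LQ: "LQ \<in> carrier_mat M M"
    and unit: "unit_lower_triangular LQ" and fact: "transpose_mat ?Q = LQ * transpose_mat QD"
    unfolding LU_trick_def using Q by auto
  have QDT: "transpose_mat QD \<in> carrier_mat M M" using QD by simp
  have "det (transpose_mat ?Q) \<noteq> 0"
    using increasing_nodes.det_coll_matrix_nonzero[OF nodes] det_transpose[OF Q] by simp
  hence "det (transpose_mat QD) \<noteq> 0" unfolding fact det_mult[OF LQ QDT] by simp
  hence "det QD \<noteq> 0" using det_transpose[OF QD] by simp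
  then obtain QDi where QDi: "QDi \<in> carrier_mat M M" and inv: "QDi * QD = 1\<^sub>m M"
    using det_nonzero_imp_left_inverse[OF QD] by blast
  have "?Q = transpose_mat (LQ * transpose_mat QD)" using arg_cong[OF fact, of transpose_mat] by simp
  also have "\<dots> = QD * transpose_mat LQ" using transpose_mult[OF LQ QDT] by simp
  finally have "QDi * ?Q = QDi * (QD * transpose_mat LQ)" by simp
  also have "\<dots> = (QDi * QD) * transpose_mat LQ"
    by (rule assoc_mult_mat[symmetric]) (use QDi QD LQ in auto)
  also have "\<dots> = transpose_mat LQ" using inv LQ by simp
  finally show ?thesis using that QDi LQ inv unit by blast
qed

text \<open>Every factor of \<open>X\<^sup>k\<close> raises the level \<open>f\<close>, which cannot rise \<open>m\<close> times.\<close>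

lemma mat_pow_eq_zero_of_level:
  fixes X :: "'a :: semiring_1 mat"
  assumes X: "X \<in> carrier_mat n n"
    and level: "\<And>i j. i < n \<Longrightarrow> j < n \<Longrightarrow> X $$ (i,j) \<noteq> 0 \<Longrightarrow> f i < f j"
    and bound: "\<And>i. i < n \<Longrightarrow> f i < m" and "m \<le> k"
  shows "X ^\<^sub>m k = 0\<^sub>m n n"
proof -
  have raise: "\<forall>i j. i < n \<longrightarrow> j < n \<longrightarrow> (X ^\<^sub>m l) $$ (i,j) \<noteq> 0 \<longrightarrow> f i + l \<le> f j" for l
  proof (induction l)
    case 0
    show ?case using X by auto
  next
    case (Suc l)
    show ?case
    proof (intro allI impI)
      fix i j assume i: "i < n" and j: "j < n" and nz: "(X ^\<^sub>m Suc l) $$ (i,j) \<noteq> 0"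
      have "(X ^\<^sub>m Suc l) $$ (i,j) = (\<Sum>r<n. (X ^\<^sub>m l) $$ (i,r) * X $$ (r,j))"
        using X i j by (simp add: scalar_prod_def atLeast0LessThan)
      with nz obtain r where r: "r < n" "(X ^\<^sub>m l) $$ (i,r) \<noteq> 0" "X $$ (r,j) \<noteq> 0"
        by (metis (no_types, lifting) lessThan_iff mult_not_zero sum.neutral)
      from Suc.IH i r have "f i + l \<le> f r" by auto
      moreover have "f r < f j" by (rule level[OF r(1) j r(3)])
      ultimately show "f i + Suc l \<le> f j" by simp
    qed
  qed
  show ?thesis
  proof (rule eq_matI)
    fix i j assume "i < dim_row (0\<^sub>m n n :: 'a mat)" and "j < dim_col (0\<^sub>m n n :: 'a mat)"
    hence i: "i < n" and j: "j < n" by auto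
    have "(X ^\<^sub>m k) $$ (i,j) = 0"
      using raise[of k] i j bound[OF j] \<open>m \<le> k\<close> by fastforce
    thus "(X ^\<^sub>m k) $$ (i,j) = (0\<^sub>m n n :: 'a mat) $$ (i,j)" using i j by simp
  qed (use X in auto)
qed

text \<open>The level of an index of \<open>I\<^sub>L \<otimes> U \<otimes> I\<^sub>N\<close> is its position in the middle factor.\<close>

lemma kron_unit_upper_triangular_nilpotent:
  fixes U :: "complex mat"
  assumes U: "U \<in> carrier_mat M M" and N: "0 < N" and M: "0 < M"
    and diag: "\<And>a. a < M \<Longrightarrow> U $$ (a,a) = 1"
    and upper: "\<And>a b. a < M \<Longrightarrow> b < M \<Longrightarrow> b < a \<Longrightarrow> U $$ (a,b) = 0"
    and "M \<le> k"
  shows "(1\<^sub>m (L * (M * N)) - kron (1\<^sub>m L) (kron U (1\<^sub>m N))) ^\<^sub>m k = 0\<^sub>m (L * (M * N)) (L * (M * N))"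
proof (rule mat_pow_eq_zero_of_level[where f = "\<lambda>i. (i mod (M * N)) div N" and m = M])
  show "1\<^sub>m (L * (M * N)) - kron (1\<^sub>m L) (kron U (1\<^sub>m N)) \<in> carrier_mat (L * (M * N)) (L * (M * N))"
    using U by (auto intro!: minus_carrier_mat kron_carrier_mat)
  show "M \<le> k" by fact
  have MN: "0 < M * N" using M N by simp
  show "(i mod (M * N)) div N < M" for i
    using MN N by (simp add: less_mult_imp_div_less)
  fix i j assume i: "i < L * (M * N)" and j: "j < L * (M * N)"
  assume nz: "(1\<^sub>m (L * (M * N)) - kron (1\<^sub>m L) (kron U (1\<^sub>m N))) $$ (i,j) \<noteq> 0"
  define a where "a = (i mod (M * N)) div N"
  define b where "b = (j mod (M * N)) div N"
  have ab: "a < M" "b < M" unfolding a_def b_def using MN N by (simp_all add: less_mult_imp_div_less)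
  have "i mod (M * N) < M * N" "j mod (M * N) < M * N" "i div (M * N) < L" "j div (M * N) < L"
    using i j MN by (auto simp: less_mult_imp_div_less)
  hence K: "kron (1\<^sub>m L) (kron U (1\<^sub>m N)) $$ (i,j) =
     (if i div (M * N) = j div (M * N) then 1 else 0) *
     (U $$ (a,b) * (if i mod (M * N) mod N = j mod (M * N) mod N then 1 else 0))"
    using i j U ab N unfolding a_def b_def by (simp add: index_kron)
  have X: "(1\<^sub>m (L * (M * N)) - kron (1\<^sub>m L) (kron U (1\<^sub>m N))) $$ (i,j) =
      (if i = j then 1 else 0) - kron (1\<^sub>m L) (kron U (1\<^sub>m N)) $$ (i,j)"
    using i j U by simp
  have same: "i = j" if "i div (M * N) = j div (M * N)" "a = b" "i mod (M * N) mod N = j mod (M * N) mod N"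
    using that unfolding a_def b_def by (metis div_mult_mod_eq)
  show "a < b"
  proof (rule ccontr)
    assume "\<not> a < b"
    then consider "b < a" | "a = b" by linarith
    thus False
    proof cases
      case 1
      hence "i \<noteq> j" unfolding a_def b_def by auto
      thus False using nz X K upper[OF ab(1,2) 1] by simp
    next
      case 2
      show False
      proof (cases "i = j")
        case True
        thus False using nz X K diag[OF ab(1)] 2 by simp
      next
        case False
        hence "kron (1\<^sub>m L) (kron U (1\<^sub>m N)) $$ (i,j) = 0" using K same 2 by auto
        thus False using nz X False by simp
      qed
    qed
  qed
qed

lemma mat_inv_inverse:
  assumes P: "P \<in> carrier_mat n n" and inv: "invertible_mat P"
  shows "mat_inv P \<in> carrier_mat n n" "P * mat_inv P = 1\<^sub>m n" "mat_inv P * P = 1\<^sub>m n"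
proof -
  from inv have "\<exists>B. inverts_mat P B \<and> inverts_mat B P" unfolding invertible_mat_def by blast
  hence inverts: "inverts_mat P (mat_inv P) \<and> inverts_mat (mat_inv P) P"
    unfolding mat_inv_def by (rule someI_ex)
  have right: "P * mat_inv P = 1\<^sub>m n"
    using conjunct1[OF inverts] P unfolding inverts_mat_def by (simp add: carrier_matD)
  have left: "mat_inv P * P = 1\<^sub>m (dim_row (mat_inv P))"
    using conjunct2[OF inverts] unfolding inverts_mat_def .
  have "dim_col (mat_inv P) = n" using arg_cong[OF right, of dim_col] by simp
  moreover have "dim_row (mat_inv P) = n" using arg_cong[OF left, of dim_col] P by simp
  ultimately show "mat_inv P \<in> carrier_mat n n" by (intro carrier_matI)
  show "P * mat_inv P = 1\<^sub>m n" by (rule right)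
  show "mat_inv P * P = 1\<^sub>m n" using left \<open>dim_row (mat_inv P) = n\<close> by simp
qed

lemma kron_one_mult_kron_one:
  fixes A B C D :: "'a :: comm_semiring_1 mat"
  assumes "A \<in> carrier_mat m m" "C \<in> carrier_mat m m" "B \<in> carrier_mat n n" "D \<in> carrier_mat n n"
    and "0 < m" "0 < n"
  shows "kron (1\<^sub>m L) (kron A B) * kron (1\<^sub>m L) (kron C D) = kron (1\<^sub>m L) (kron (A * C) (B * D))"
proof -
  have "kron (1\<^sub>m L) (kron A B) * kron (1\<^sub>m L) (kron C D) = kron (1\<^sub>m L * 1\<^sub>m L) (kron A B * kron C D)"
    using assms
    by (intro kron_mult_kron[OF one_carrier_mat kron_carrier_mat[of A m m B n n]
          one_carrier_mat kron_carrier_mat[of C m m D n n]]) auto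
  also have "kron A B * kron C D = kron (A * C) (B * D)"
    by (rule kron_mult_kron[OF assms(1,3,2,4)]) (use assms in auto)
  finally show ?thesis by simp
qed

text \<open>The left inverse is \<open>I\<^sub>L \<otimes> Q\<^sub>\<Delta>\<^sup>-\<^sup>1 \<otimes> A\<^sup>-\<^sup>1\<close>; it maps \<open>I\<^sub>L \<otimes> Q \<otimes> A\<close> to the unit upper
  triangular \<open>I\<^sub>L \<otimes> L\<^sub>Q\<^sup>T \<otimes> I\<^sub>N\<close>.\<close>

lemma LU_preconditioner_left_inverse:
  assumes nodes: "increasing_nodes M \<tau>" and LU: "LU_trick (coll_matrix M \<tau>) QD"
    and A: "A \<in> carrier_mat N N" "invertible_mat A" and N: "0 < N"
  obtains Dinv where "Dinv \<in> carrier_mat (L * M * N) (L * M * N)"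
    "Dinv * kron (1\<^sub>m L) (kron QD A) = 1\<^sub>m (L * M * N)"
    "\<And>k. M \<le> k \<Longrightarrow>
       (1\<^sub>m (L * M * N) - Dinv * kron (1\<^sub>m L) (kron (coll_matrix M \<tau>) A)) ^\<^sub>m k = 0\<^sub>m (L * M * N) (L * M * N)"
proof -
  obtain QDi LQ where QDi: "QDi \<in> carrier_mat M M" and LQ: "LQ \<in> carrier_mat M M"
    and inv: "QDi * QD = 1\<^sub>m M" and UQ: "QDi * coll_matrix M \<tau> = transpose_mat LQ"
    and unit: "unit_lower_triangular LQ"
    using LU_trick_left_inverse[OF nodes LU] by blast
  note Ai = mat_inv_inverse[OF A]
  have M: "0 < M" using nodes by (rule increasing_nodes.M_pos)
  have QD: "QD \<in> carrier_mat M M" by (rule LU_trick_carrier_mat[OF LU])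
  have Q: "coll_matrix M \<tau> \<in> carrier_mat M M" unfolding coll_matrix_def by simp
  define Dinv where "Dinv = kron (1\<^sub>m L) (kron QDi (mat_inv A))"
  have Dinv: "Dinv \<in> carrier_mat (L * M * N) (L * M * N)"
    unfolding Dinv_def mult.assoc by (rule kron_carrier_mat[OF one_carrier_mat kron_carrier_mat[OF QDi Ai(1)]])
  have "Dinv * kron (1\<^sub>m L) (kron QD A) = kron (1\<^sub>m L) (kron (QDi * QD) (mat_inv A * A))"
    unfolding Dinv_def by (rule kron_one_mult_kron_one[OF QDi QD Ai(1) A(1) M N])
  also have "\<dots> = 1\<^sub>m (L * M * N)"
    unfolding inv Ai(3) mult.assoc kron_one_one[OF N] by (rule kron_one_one) (use M N in simp)
  finally have DinvD: "Dinv * kron (1\<^sub>m L) (kron QD A) = 1\<^sub>m (L * M * N)" .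
  have "Dinv * kron (1\<^sub>m L) (kron (coll_matrix M \<tau>) A)
      = kron (1\<^sub>m L) (kron (QDi * coll_matrix M \<tau>) (mat_inv A * A))"
    unfolding Dinv_def by (rule kron_one_mult_kron_one[OF QDi Q Ai(1) A(1) M N])
  hence DinvDQ: "Dinv * kron (1\<^sub>m L) (kron (coll_matrix M \<tau>) A) = kron (1\<^sub>m L) (kron (transpose_mat LQ) (1\<^sub>m N))"
    unfolding UQ Ai(3) .
  have "(1\<^sub>m (L * (M * N)) - kron (1\<^sub>m L) (kron (transpose_mat LQ) (1\<^sub>m N))) ^\<^sub>m k
      = 0\<^sub>m (L * (M * N)) (L * (M * N))" if "M \<le> k" for k
  proof (rule kron_unit_upper_triangular_nilpotent)
    show "transpose_mat LQ $$ (a,a) = 1" if "a < M" for a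
      using unit that LQ unfolding unit_lower_triangular_def by auto
    show "transpose_mat LQ $$ (a,b) = 0" if "a < M" "b < M" "b < a" for a b
      using unit that LQ unfolding unit_lower_triangular_def by auto
  qed (use LQ N M that in auto)
  hence "(1\<^sub>m (L * M * N) - Dinv * kron (1\<^sub>m L) (kron (coll_matrix M \<tau>) A)) ^\<^sub>m k
      = 0\<^sub>m (L * M * N) (L * M * N)" if "M \<le> k" for k
    using that unfolding DinvDQ mult.assoc .
  with Dinv DinvD show ?thesis by (rule that)
qed

lemma scaled_inverse_eq:
  fixes W D Dinv F :: "complex mat"
  assumes c: "W \<in> carrier_mat n n" "D \<in> carrier_mat n n" "Dinv \<in> carrier_mat n n" "F \<in> carrier_mat n n"
    and PW: "(1\<^sub>m n - \<mu> \<cdot>\<^sub>m D - F) * W = 1\<^sub>m n" and DD: "Dinv * D = 1\<^sub>m n"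
  shows "\<mu> \<cdot>\<^sub>m W = Dinv * (W - F * W - 1\<^sub>m n)"
proof -
  have "(1\<^sub>m n - \<mu> \<cdot>\<^sub>m D - F) * W = (1\<^sub>m n - \<mu> \<cdot>\<^sub>m D) * W - F * W"
    by (rule minus_mult_distrib_mat) (use c in auto)
  also have "(1\<^sub>m n - \<mu> \<cdot>\<^sub>m D) * W = 1\<^sub>m n * W - (\<mu> \<cdot>\<^sub>m D) * W"
    by (rule minus_mult_distrib_mat) (use c in auto)
  also have "(\<mu> \<cdot>\<^sub>m D) * W = \<mu> \<cdot>\<^sub>m (D * W)" by (rule mult_smult_assoc_mat) (use c in auto)
  finally have PW': "W - \<mu> \<cdot>\<^sub>m (D * W) - F * W = 1\<^sub>m n" using PW c by simp
  have DW: "\<mu> \<cdot>\<^sub>m (D * W) = W - F * W - 1\<^sub>m n"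
  proof (rule eq_matI)
    fix i j assume "i < dim_row (W - F * W - 1\<^sub>m n)" "j < dim_col (W - F * W - 1\<^sub>m n)"
    hence ij: "i < n" "j < n" using c by auto
    from arg_cong[where f = "\<lambda>X. X $$ (i,j)", OF PW'] ij c
    show "(\<mu> \<cdot>\<^sub>m (D * W)) $$ (i,j) = (W - F * W - 1\<^sub>m n) $$ (i,j)"
      by (cases "i = j") (auto simp: algebra_simps)
  qed (use c in auto)
  have "\<mu> \<cdot>\<^sub>m W = \<mu> \<cdot>\<^sub>m ((Dinv * D) * W)" using DD c by simp
  also have "(Dinv * D) * W = Dinv * (D * W)" by (rule assoc_mult_mat) (use c in auto)
  also have "\<mu> \<cdot>\<^sub>m (Dinv * (D * W)) = Dinv * (\<mu> \<cdot>\<^sub>m (D * W))"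
    by (rule mult_smult_distrib[symmetric]) (use c in auto)
  finally show ?thesis unfolding DW .
qed

lemma scaled_inverse_norm_le:
  fixes W Dinv F :: "complex mat" and \<mu> :: real
  assumes c: "W \<in> carrier_mat n n" "Dinv \<in> carrier_mat n n" "F \<in> carrier_mat n n" and mu: "0 < \<mu>"
    and muW: "complex_of_real \<mu> \<cdot>\<^sub>m W = Dinv * (W - F * W - 1\<^sub>m n)"
    and big: "2 * entrywise_norm Dinv * (1 + entrywise_norm F) \<le> \<mu>"
  shows "entrywise_norm W \<le> 2 * entrywise_norm Dinv * real n / \<mu>"
proof -
  have c2: "W - F * W \<in> carrier_mat n n" using c by auto
  have "\<mu> * entrywise_norm W = entrywise_norm (complex_of_real \<mu> \<cdot>\<^sub>m W)"
    using mu by (simp add: entrywise_norm_smult)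
  also have "\<dots> \<le> entrywise_norm Dinv * entrywise_norm (W - F * W - 1\<^sub>m n)" unfolding muW
    by (rule entrywise_norm_mult_le) (use c in auto)
  also have "entrywise_norm (W - F * W - 1\<^sub>m n) \<le> entrywise_norm (W - F * W) + entrywise_norm (1\<^sub>m n)"
    by (rule entrywise_norm_diff_le[OF c2]) auto
  also have "entrywise_norm (W - F * W) \<le> entrywise_norm W + entrywise_norm (F * W)"
    by (rule entrywise_norm_diff_le) (use c in auto)
  also have "entrywise_norm (F * W) \<le> entrywise_norm F * entrywise_norm W"
    by (rule entrywise_norm_mult_le[OF c(3) c(1)])
  finally have "\<mu> * entrywise_norm W
      \<le> entrywise_norm Dinv * (entrywise_norm W + entrywise_norm F * entrywise_norm W + real n)"
    using entrywise_norm_nonneg[of Dinv] by (simp add: entrywise_norm_one mult_left_mono)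
  also have "\<dots> = (entrywise_norm Dinv * (1 + entrywise_norm F)) * entrywise_norm W
      + entrywise_norm Dinv * real n"
    by (simp add: algebra_simps)
  also have "(entrywise_norm Dinv * (1 + entrywise_norm F)) * entrywise_norm W \<le> (\<mu> / 2) * entrywise_norm W"
    using big by (intro mult_right_mono entrywise_norm_nonneg) auto
  finally have "\<mu> * entrywise_norm W \<le> 2 * (entrywise_norm Dinv * real n)" by simp
  thus ?thesis using mu by (simp add: field_simps)
qed

text \<open>Uses \<open>\<mu> W = D\<^sup>-\<^sup>1 W - D\<^sup>-\<^sup>1\<close> twice: once on \<open>W D\<^sub>Q\<close> and once, via \<open>W - \<mu> W D = I\<close>, on \<open>I - W\<close>.\<close>

lemma smoother_splitting:
  fixes W D DQ Dinv F :: "complex mat"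
  assumes c: "W \<in> carrier_mat n n" "D \<in> carrier_mat n n" "Dinv \<in> carrier_mat n n"
       "DQ \<in> carrier_mat n n" "F \<in> carrier_mat n n"
    and WP: "W * (1\<^sub>m n - \<mu> \<cdot>\<^sub>m D) = 1\<^sub>m n" and DD: "Dinv * D = 1\<^sub>m n"
    and muW: "\<mu> \<cdot>\<^sub>m W = Dinv * W - Dinv"
  shows "1\<^sub>m n - W * (1\<^sub>m n - \<mu> \<cdot>\<^sub>m DQ - F)
    = (1\<^sub>m n - Dinv * DQ) + ((Dinv * W) * DQ - (Dinv * W) * D + W * F)"
proof -
  have WC: "W * (1\<^sub>m n - \<mu> \<cdot>\<^sub>m DQ - F) = W - \<mu> \<cdot>\<^sub>m (W * DQ) - W * F"
  proof -
    have "W * (1\<^sub>m n - \<mu> \<cdot>\<^sub>m DQ - F) = W * (1\<^sub>m n - \<mu> \<cdot>\<^sub>m DQ) - W * F"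
      by (rule mult_minus_distrib_mat) (use c in auto)
    also have "W * (1\<^sub>m n - \<mu> \<cdot>\<^sub>m DQ) = W * 1\<^sub>m n - W * (\<mu> \<cdot>\<^sub>m DQ)"
      by (rule mult_minus_distrib_mat) (use c in auto)
    also have "W * (\<mu> \<cdot>\<^sub>m DQ) = \<mu> \<cdot>\<^sub>m (W * DQ)" by (rule mult_smult_distrib) (use c in auto)
    finally show ?thesis using c by simp
  qed
  have WPW: "W - \<mu> \<cdot>\<^sub>m (W * D) = 1\<^sub>m n"
  proof -
    have "W * (1\<^sub>m n - \<mu> \<cdot>\<^sub>m D) = W * 1\<^sub>m n - W * (\<mu> \<cdot>\<^sub>m D)"
      by (rule mult_minus_distrib_mat) (use c in auto)
    also have "W * (\<mu> \<cdot>\<^sub>m D) = \<mu> \<cdot>\<^sub>m (W * D)" by (rule mult_smult_distrib) (use c in auto)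
    finally show ?thesis using c WP by simp
  qed
  have WDQ: "\<mu> \<cdot>\<^sub>m (W * X) = (Dinv * W) * X - Dinv * X" if X: "X \<in> carrier_mat n n" for X
  proof -
    have "\<mu> \<cdot>\<^sub>m (W * X) = (\<mu> \<cdot>\<^sub>m W) * X" by (rule mult_smult_assoc_mat[symmetric]) (use c X in auto)
    also have "\<dots> = (Dinv * W) * X - Dinv * X" unfolding muW
      by (rule minus_mult_distrib_mat) (use c X in auto)
    finally show ?thesis .
  qed
  show ?thesis
  proof (rule eq_matI)
    fix i j
    assume "i < dim_row ((1\<^sub>m n - Dinv * DQ) + ((Dinv * W) * DQ - (Dinv * W) * D + W * F))"
      and "j < dim_col ((1\<^sub>m n - Dinv * DQ) + ((Dinv * W) * DQ - (Dinv * W) * D + W * F))"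
    hence ij: "i < n" "j < n" using c by auto
    let ?e = "\<lambda>X. X $$ (i,j)"
    have "?e (W * (1\<^sub>m n - \<mu> \<cdot>\<^sub>m DQ - F)) = ?e W - \<mu> * ?e (W * DQ) - ?e (W * F)"
      using arg_cong[where f = ?e, OF WC] ij c by (simp del: index_mult_mat(1))
    moreover have "?e W - \<mu> * ?e (W * D) = (if i = j then 1 else 0)"
      using arg_cong[where f = ?e, OF WPW] ij c by (simp del: index_mult_mat(1))
    moreover have "\<mu> * ?e (W * DQ) = ?e ((Dinv * W) * DQ) - ?e (Dinv * DQ)"
      using arg_cong[where f = ?e, OF WDQ[OF c(4)]] ij c by (simp del: index_mult_mat(1))
    moreover have "\<mu> * ?e (W * D) = ?e ((Dinv * W) * D) - (if i = j then 1 else 0)"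
      using arg_cong[where f = ?e, OF WDQ[OF c(2)]] ij c DD by (simp del: index_mult_mat(1))
    ultimately show "?e (1\<^sub>m n - W * (1\<^sub>m n - \<mu> \<cdot>\<^sub>m DQ - F))
        = ?e ((1\<^sub>m n - Dinv * DQ) + ((Dinv * W) * DQ - (Dinv * W) * D + W * F))"
      using ij c by (simp del: index_mult_mat(1) add: algebra_simps)
  qed (use c in auto)
qed

lemma smoother_error_norm_le:
  fixes W D DQ Dinv F :: "complex mat"
  assumes c: "W \<in> carrier_mat n n" "D \<in> carrier_mat n n" "Dinv \<in> carrier_mat n n"
       "DQ \<in> carrier_mat n n" "F \<in> carrier_mat n n"
  shows "entrywise_norm ((Dinv * W) * DQ - (Dinv * W) * D + W * F)
    \<le> entrywise_norm W * (entrywise_norm Dinv * (entrywise_norm DQ + entrywise_norm D) + entrywise_norm F)"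
proof -
  have DW: "Dinv * W \<in> carrier_mat n n" using c by auto
  have "entrywise_norm ((Dinv * W) * DQ - (Dinv * W) * D + W * F)
      \<le> entrywise_norm ((Dinv * W) * DQ - (Dinv * W) * D) + entrywise_norm (W * F)"
    by (rule entrywise_norm_add_le) (use c in auto)
  also have "entrywise_norm ((Dinv * W) * DQ - (Dinv * W) * D)
      \<le> entrywise_norm ((Dinv * W) * DQ) + entrywise_norm ((Dinv * W) * D)"
    by (rule entrywise_norm_diff_le) (use c in auto)
  also have "entrywise_norm ((Dinv * W) * DQ) \<le> entrywise_norm (Dinv * W) * entrywise_norm DQ"
    by (rule entrywise_norm_mult_le[OF DW c(4)])
  also have "entrywise_norm ((Dinv * W) * D) \<le> entrywise_norm (Dinv * W) * entrywise_norm D"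
    by (rule entrywise_norm_mult_le[OF DW c(2)])
  also have "entrywise_norm (W * F) \<le> entrywise_norm W * entrywise_norm F"
    by (rule entrywise_norm_mult_le[OF c(1,5)])
  finally have "entrywise_norm ((Dinv * W) * DQ - (Dinv * W) * D + W * F)
      \<le> entrywise_norm (Dinv * W) * (entrywise_norm DQ + entrywise_norm D) + entrywise_norm W * entrywise_norm F"
    by (simp add: algebra_simps)
  moreover have "entrywise_norm (Dinv * W) * (entrywise_norm DQ + entrywise_norm D)
      \<le> (entrywise_norm Dinv * entrywise_norm W) * (entrywise_norm DQ + entrywise_norm D)"
    using entrywise_norm_mult_le[OF c(3,1)] entrywise_norm_nonneg[of DQ] entrywise_norm_nonneg[of D]
    by (intro mult_right_mono) auto
  ultimately show ?thesis by (simp add: algebra_simps)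
qed

lemma smoother_eq_nilpotent_plus_error:
  fixes W D DQ Dinv F :: "complex mat" and \<mu> :: real
  assumes c: "W \<in> carrier_mat n n" "D \<in> carrier_mat n n" "Dinv \<in> carrier_mat n n"
       "DQ \<in> carrier_mat n n" "F \<in> carrier_mat n n"
    and PW: "(1\<^sub>m n - complex_of_real \<mu> \<cdot>\<^sub>m D) * W = 1\<^sub>m n"
    and WP: "W * (1\<^sub>m n - complex_of_real \<mu> \<cdot>\<^sub>m D) = 1\<^sub>m n"
    and DD: "Dinv * D = 1\<^sub>m n" and mu: "0 < \<mu>" and big: "2 * entrywise_norm Dinv \<le> \<mu>"
  obtains E where "E \<in> carrier_mat n n"
    "1\<^sub>m n - W * (1\<^sub>m n - complex_of_real \<mu> \<cdot>\<^sub>m DQ - F) = (1\<^sub>m n - Dinv * DQ) + E"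
    "entrywise_norm E \<le> 2 * entrywise_norm Dinv * real n
       * (entrywise_norm Dinv * (entrywise_norm DQ + entrywise_norm D) + entrywise_norm F) / \<mu>"
proof -
  let ?\<mu> = "complex_of_real \<mu>"
  have "1\<^sub>m n - ?\<mu> \<cdot>\<^sub>m D - 0\<^sub>m n n = 1\<^sub>m n - ?\<mu> \<cdot>\<^sub>m D" by (rule eq_matI) (use c in auto)
  hence "(1\<^sub>m n - ?\<mu> \<cdot>\<^sub>m D - 0\<^sub>m n n) * W = 1\<^sub>m n" using PW by simp
  hence muW: "?\<mu> \<cdot>\<^sub>m W = Dinv * (W - 0\<^sub>m n n * W - 1\<^sub>m n)"
    by (rule scaled_inverse_eq[OF c(1-3) zero_carrier_mat _ DD])
  have W: "entrywise_norm W \<le> 2 * entrywise_norm Dinv * real n / \<mu>"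
    by (rule scaled_inverse_norm_le[OF c(1,3) zero_carrier_mat mu muW]) (use big in \<open>simp add: entrywise_norm_zero\<close>)
  have W0: "W - 0\<^sub>m n n * W - 1\<^sub>m n = W - 1\<^sub>m n" by (rule eq_matI) (use c in auto)
  have "Dinv * (W - 1\<^sub>m n) = Dinv * W - Dinv * 1\<^sub>m n"
    by (rule mult_minus_distrib_mat) (use c in auto)
  hence "?\<mu> \<cdot>\<^sub>m W = Dinv * W - Dinv"
    using muW unfolding W0 right_mult_one_mat[OF c(3)] by simp
  note split = smoother_splitting[OF c WP DD this]
  define E where "E = (Dinv * W) * DQ - (Dinv * W) * D + W * F"
  define K where "K = entrywise_norm Dinv * (entrywise_norm DQ + entrywise_norm D) + entrywise_norm F"
  have K_nonneg: "0 \<le> K" unfolding K_def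
    by (intro add_nonneg_nonneg mult_nonneg_nonneg entrywise_norm_nonneg)
  have E: "E \<in> carrier_mat n n" unfolding E_def using c by auto
  have "entrywise_norm E \<le> entrywise_norm W * K"
    unfolding E_def K_def by (rule smoother_error_norm_le[OF c])
  also have "entrywise_norm W * K \<le> (2 * entrywise_norm Dinv * real n / \<mu>) * K"
    using W K_nonneg by (rule mult_right_mono)
  finally have "entrywise_norm E \<le> 2 * entrywise_norm Dinv * real n * K / \<mu>" by simp
  with E show ?thesis using that split unfolding E_def K_def by blast
qed

text \<open>Here the nilpotency of \<open>X = I - D\<^sup>-\<^sup>1 D\<^sub>Q\<close> enters: \<open>T\<^sub>S\<^sup>k = (X + E)\<^sup>k - X\<^sup>k\<close>.\<close>

lemma smoother_power_norm_le:
  fixes W D DQ Dinv F :: "complex mat" and \<mu> :: real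
  assumes c: "W \<in> carrier_mat n n" "D \<in> carrier_mat n n" "Dinv \<in> carrier_mat n n"
       "DQ \<in> carrier_mat n n" "F \<in> carrier_mat n n"
    and PW: "(1\<^sub>m n - complex_of_real \<mu> \<cdot>\<^sub>m D) * W = 1\<^sub>m n"
    and WP: "W * (1\<^sub>m n - complex_of_real \<mu> \<cdot>\<^sub>m D) = 1\<^sub>m n"
    and DD: "Dinv * D = 1\<^sub>m n" and nil: "(1\<^sub>m n - Dinv * DQ) ^\<^sub>m k = 0\<^sub>m n n"
    and mu: "1 \<le> \<mu>" "2 * entrywise_norm Dinv \<le> \<mu>"
  defines "e \<equiv> 2 * entrywise_norm Dinv * real n
     * (entrywise_norm Dinv * (entrywise_norm DQ + entrywise_norm D) + entrywise_norm F)"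
  shows "entrywise_norm ((1\<^sub>m n - W * (1\<^sub>m n - complex_of_real \<mu> \<cdot>\<^sub>m DQ - F)) ^\<^sub>m k)
    \<le> real k * real n * (entrywise_norm (1\<^sub>m n - Dinv * DQ) + e + 1) ^ k * e / \<mu>"
proof -
  obtain E where E: "E \<in> carrier_mat n n"
    and split: "1\<^sub>m n - W * (1\<^sub>m n - complex_of_real \<mu> \<cdot>\<^sub>m DQ - F) = (1\<^sub>m n - Dinv * DQ) + E"
    and E_le: "entrywise_norm E \<le> e / \<mu>"
    by (rule smoother_eq_nilpotent_plus_error[OF c PW WP DD _ mu(2)]) (use mu(1) in \<open>auto simp: e_def\<close>)
  have X: "1\<^sub>m n - Dinv * DQ \<in> carrier_mat n n" using c by auto
  have "0 \<le> e" unfolding e_def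
    by (intro add_nonneg_nonneg mult_nonneg_nonneg entrywise_norm_nonneg) auto
  hence "e / \<mu> \<le> e" using mu(1) by (simp add: divide_le_eq mult_le_cancel_left1)
  hence "entrywise_norm ((1\<^sub>m n - Dinv * DQ + E) ^\<^sub>m k - (1\<^sub>m n - Dinv * DQ) ^\<^sub>m k)
      \<le> real k * real n * (entrywise_norm (1\<^sub>m n - Dinv * DQ) + e + 1) ^ k * (e / \<mu>)"
    using entrywise_norm_nonneg[of "1\<^sub>m n - Dinv * DQ"] entrywise_norm_nonneg[of E] E_le
    by (intro entrywise_norm_power_perturb_le[OF X E E_le]) auto
  moreover have "(1\<^sub>m n - Dinv * DQ + E) ^\<^sub>m k - (1\<^sub>m n - Dinv * DQ) ^\<^sub>m k = (1\<^sub>m n - Dinv * DQ + E) ^\<^sub>m k"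
  proof -
    have "Y - 0\<^sub>m n n = Y" if "Y \<in> carrier_mat n n" for Y :: "complex mat"
      using that by (intro eq_matI) auto
    moreover have "(1\<^sub>m n - Dinv * DQ + E) ^\<^sub>m k \<in> carrier_mat n n" using X E by auto
    ultimately show ?thesis unfolding nil by blast
  qed
  ultimately show ?thesis unfolding split by simp
qed

lemma collocation_operator_norm_le:
  fixes DQ F :: "complex mat"
  assumes "DQ \<in> carrier_mat n n" "F \<in> carrier_mat n n"
  shows "entrywise_norm (1\<^sub>m n - c \<cdot>\<^sub>m DQ - F) \<le> real n + cmod c * entrywise_norm DQ + entrywise_norm F"
proof -
  have "entrywise_norm (1\<^sub>m n - c \<cdot>\<^sub>m DQ - F) \<le> entrywise_norm (1\<^sub>m n - c \<cdot>\<^sub>m DQ) + entrywise_norm F"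
    by (rule entrywise_norm_diff_le) (use assms in auto)
  also have "entrywise_norm (1\<^sub>m n - c \<cdot>\<^sub>m DQ) \<le> entrywise_norm (1\<^sub>m n) + entrywise_norm (c \<cdot>\<^sub>m DQ)"
    by (rule entrywise_norm_diff_le) (use assms in auto)
  finally show ?thesis by (simp add: entrywise_norm_one entrywise_norm_smult)
qed

text \<open>The coarse-grid correction stays bounded because \<open>\<mu> P\<^sub>c\<^sup>-\<^sup>1\<close> does, while \<open>C\<close> grows only linearly in \<open>\<mu>\<close>.\<close>

lemma coarse_correction_norm_le:
  fixes Wc Dc Fc Dcinv DQ F TCF TFC :: "complex mat" and \<mu> :: real
  assumes c: "Wc \<in> carrier_mat m m" "Dc \<in> carrier_mat m m" "Dcinv \<in> carrier_mat m m" "Fc \<in> carrier_mat m m"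
      "DQ \<in> carrier_mat n n" "F \<in> carrier_mat n n" "TCF \<in> carrier_mat n m" "TFC \<in> carrier_mat m n"
    and PW: "(1\<^sub>m m - complex_of_real \<mu> \<cdot>\<^sub>m Dc - Fc) * Wc = 1\<^sub>m m" and DD: "Dcinv * Dc = 1\<^sub>m m"
    and mu: "1 \<le> \<mu>" "2 * entrywise_norm Dcinv * (1 + entrywise_norm Fc) \<le> \<mu>"
  shows "entrywise_norm (1\<^sub>m n - TCF * Wc * TFC * (1\<^sub>m n - complex_of_real \<mu> \<cdot>\<^sub>m DQ - F))
    \<le> real n + entrywise_norm TCF * entrywise_norm TFC * (2 * entrywise_norm Dcinv * real m)
         * (real n + entrywise_norm DQ + entrywise_norm F)"
proof -
  let ?C = "1\<^sub>m n - complex_of_real \<mu> \<cdot>\<^sub>m DQ - F"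
  let ?t = "entrywise_norm TCF * entrywise_norm TFC"
  have C: "?C \<in> carrier_mat n n" using c by auto
  have TWT: "TCF * Wc * TFC \<in> carrier_mat n n" using c by auto
  have Wc: "entrywise_norm Wc \<le> 2 * entrywise_norm Dcinv * real m / \<mu>"
    using mu by (intro scaled_inverse_norm_le[OF c(1,3,4)] scaled_inverse_eq[OF c(1,2,3,4) PW DD]) auto
  have C_le: "entrywise_norm ?C \<le> real n + \<mu> * entrywise_norm DQ + entrywise_norm F"
    using collocation_operator_norm_le[OF c(5,6), of "complex_of_real \<mu>"] mu(1) by simp
  have "entrywise_norm (TCF * Wc * TFC * ?C) \<le> ?t * entrywise_norm Wc * entrywise_norm ?C"
  proof -
    have "entrywise_norm (TCF * Wc * TFC * ?C) \<le> entrywise_norm (TCF * Wc * TFC) * entrywise_norm ?C"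
      by (rule entrywise_norm_mult_le[OF TWT C])
    also have "entrywise_norm (TCF * Wc * TFC) \<le> entrywise_norm (TCF * Wc) * entrywise_norm TFC"
      by (rule entrywise_norm_mult_le[OF _ c(8)]) (use c in auto)
    also have "entrywise_norm (TCF * Wc) \<le> entrywise_norm TCF * entrywise_norm Wc"
      by (rule entrywise_norm_mult_le[OF c(7,1)])
    finally show ?thesis
      using entrywise_norm_nonneg[of ?C] entrywise_norm_nonneg[of TFC]
      by (simp add: mult_right_mono mult_ac)
  qed
  also have "\<dots> \<le> ?t * (2 * entrywise_norm Dcinv * real m / \<mu>) * (real n + \<mu> * entrywise_norm DQ + entrywise_norm F)"
  proof -
    have "0 \<le> 2 * entrywise_norm Dcinv * real m / \<mu>"
      using mu(1) entrywise_norm_nonneg[of Dcinv] by simp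
    thus ?thesis
      using Wc C_le entrywise_norm_nonneg[of ?C] entrywise_norm_nonneg[of Wc]
        entrywise_norm_nonneg[of TCF] entrywise_norm_nonneg[of TFC]
      by (intro mult_mono mult_left_mono mult_nonneg_nonneg) auto
  qed
  also have "\<dots> = ?t * (2 * entrywise_norm Dcinv * real m) * ((real n + entrywise_norm F) / \<mu> + entrywise_norm DQ)"
    using mu(1) by (simp add: field_simps)
  also have "\<dots> \<le> ?t * (2 * entrywise_norm Dcinv * real m) * (real n + entrywise_norm DQ + entrywise_norm F)"
  proof -
    have "(real n + entrywise_norm F) / \<mu> \<le> real n + entrywise_norm F"
      using mu(1) entrywise_norm_nonneg[of F]
      by (simp add: divide_le_eq mult_le_cancel_left1)
    thus ?thesis
      using entrywise_norm_nonneg[of Dcinv] entrywise_norm_nonneg[of TCF] entrywise_norm_nonneg[of TFC]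
      by (intro mult_left_mono) auto
  qed
  finally have "entrywise_norm (TCF * Wc * TFC * ?C)
      \<le> ?t * (2 * entrywise_norm Dcinv * real m) * (real n + entrywise_norm DQ + entrywise_norm F)" .
  thus ?thesis
    using entrywise_norm_diff_le[OF one_carrier_mat mult_carrier_mat[OF TWT C]]
    unfolding entrywise_norm_one by linarith
qed

lemma two_level_spectral_radius_le:
  fixes D DQ F Dinv Dc Fc Dcinv TCF TFC :: "complex mat" and n m k :: nat
  assumes n: "0 < n"
    and c: "D \<in> carrier_mat n n" "DQ \<in> carrier_mat n n" "F \<in> carrier_mat n n" "Dinv \<in> carrier_mat n n"
      "Dc \<in> carrier_mat m m" "Fc \<in> carrier_mat m m" "Dcinv \<in> carrier_mat m m"
      "TCF \<in> carrier_mat n m" "TFC \<in> carrier_mat m n"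
    and DD: "Dinv * D = 1\<^sub>m n" and DDc: "Dcinv * Dc = 1\<^sub>m m"
    and nil: "(1\<^sub>m n - Dinv * DQ) ^\<^sub>m k = 0\<^sub>m n n"
  shows "\<exists>\<mu>s > 0. \<exists>c > 0. \<forall>\<mu> :: real. \<mu> > \<mu>s \<longrightarrow>
     invertible_mat (1\<^sub>m n - complex_of_real \<mu> \<cdot>\<^sub>m D) \<longrightarrow>
     invertible_mat (1\<^sub>m m - complex_of_real \<mu> \<cdot>\<^sub>m Dc - Fc) \<longrightarrow>
     spectral_radius
       ((1\<^sub>m n - mat_inv (1\<^sub>m n - complex_of_real \<mu> \<cdot>\<^sub>m D) * (1\<^sub>m n - complex_of_real \<mu> \<cdot>\<^sub>m DQ - F)) ^\<^sub>m k
        * (1\<^sub>m n - TCF * mat_inv (1\<^sub>m m - complex_of_real \<mu> \<cdot>\<^sub>m Dc - Fc) * TFC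
            * (1\<^sub>m n - complex_of_real \<mu> \<cdot>\<^sub>m DQ - F))) \<le> c / \<mu>"
proof -
  define e where "e = 2 * entrywise_norm Dinv * real n
     * (entrywise_norm Dinv * (entrywise_norm DQ + entrywise_norm D) + entrywise_norm F)"
  define S where "S = real k * real n * (entrywise_norm (1\<^sub>m n - Dinv * DQ) + e + 1) ^ k * e"
  define G where "G = real n + entrywise_norm TCF * entrywise_norm TFC * (2 * entrywise_norm Dcinv * real m)
     * (real n + entrywise_norm DQ + entrywise_norm F)"
  define \<mu>s where "\<mu>s = 1 + 2 * entrywise_norm Dinv + 2 * entrywise_norm Dcinv * (1 + entrywise_norm Fc)"
  have S: "0 \<le> S" and G: "0 \<le> G" and "0 < \<mu>s"
    unfolding S_def e_def G_def \<mu>s_def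
    by (intro add_nonneg_nonneg add_pos_nonneg mult_nonneg_nonneg zero_le_power entrywise_norm_nonneg; simp)+
  moreover have "spectral_radius
       ((1\<^sub>m n - mat_inv (1\<^sub>m n - complex_of_real \<mu> \<cdot>\<^sub>m D) * (1\<^sub>m n - complex_of_real \<mu> \<cdot>\<^sub>m DQ - F)) ^\<^sub>m k
        * (1\<^sub>m n - TCF * mat_inv (1\<^sub>m m - complex_of_real \<mu> \<cdot>\<^sub>m Dc - Fc) * TFC
            * (1\<^sub>m n - complex_of_real \<mu> \<cdot>\<^sub>m DQ - F))) \<le> (S * G + 1) / \<mu>"
    if "\<mu> > \<mu>s" and inv: "invertible_mat (1\<^sub>m n - complex_of_real \<mu> \<cdot>\<^sub>m D)"
      "invertible_mat (1\<^sub>m m - complex_of_real \<mu> \<cdot>\<^sub>m Dc - Fc)" for \<mu>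
  proof -
    let ?C = "1\<^sub>m n - complex_of_real \<mu> \<cdot>\<^sub>m DQ - F"
    let ?W = "mat_inv (1\<^sub>m n - complex_of_real \<mu> \<cdot>\<^sub>m D)"
    let ?Wc = "mat_inv (1\<^sub>m m - complex_of_real \<mu> \<cdot>\<^sub>m Dc - Fc)"
    let ?TS = "(1\<^sub>m n - ?W * ?C) ^\<^sub>m k"
    let ?TCGC = "1\<^sub>m n - TCF * ?Wc * TFC * ?C"
    note W = mat_inv_inverse[OF _ inv(1)] and Wc = mat_inv_inverse[OF _ inv(2)]
    have Ph: "1\<^sub>m n - complex_of_real \<mu> \<cdot>\<^sub>m D \<in> carrier_mat n n"
      and Pc: "1\<^sub>m m - complex_of_real \<mu> \<cdot>\<^sub>m Dc - Fc \<in> carrier_mat m m" using c by auto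
    have mu: "1 \<le> \<mu>" "2 * entrywise_norm Dinv \<le> \<mu>"
      "2 * entrywise_norm Dcinv * (1 + entrywise_norm Fc) \<le> \<mu>"
      using \<open>\<mu> > \<mu>s\<close> entrywise_norm_nonneg[of Dinv] entrywise_norm_nonneg[of Dcinv]
        entrywise_norm_nonneg[of Fc]
      unfolding \<mu>s_def by (smt (verit) mult_nonneg_nonneg)+
    have TS: "entrywise_norm ?TS \<le> S / \<mu>"
      using smoother_power_norm_le[OF W(1)[OF Ph] c(1,4,2,3) W(2,3)[OF Ph] DD nil mu(1,2)]
      unfolding S_def e_def by simp
    have TCGC: "entrywise_norm ?TCGC \<le> G"
      unfolding G_def
      by (rule coarse_correction_norm_le[OF Wc(1)[OF Pc] c(5,7,6,2,3,8,9) Wc(2)[OF Pc] DDc mu(1,3)])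
    have TS_c: "?TS \<in> carrier_mat n n" and TCGC_c: "?TCGC \<in> carrier_mat n n"
      using W(1)[OF Ph] Wc(1)[OF Pc] c by auto
    have "spectral_radius (?TS * ?TCGC) \<le> entrywise_norm (?TS * ?TCGC)"
      using TS_c TCGC_c by (intro spectral_radius_le_entrywise_norm[OF _ n]) auto
    also have "\<dots> \<le> entrywise_norm ?TS * entrywise_norm ?TCGC"
      by (rule entrywise_norm_mult_le[OF TS_c TCGC_c])
    also have "\<dots> \<le> (S / \<mu>) * G"
      using TS TCGC entrywise_norm_nonneg[of ?TCGC] S mu(1) by (intro mult_mono) auto
    also have "\<dots> \<le> (S * G + 1) / \<mu>"
      using mu(1) by (simp add: divide_right_mono)
    finally show ?thesis .
  qed
  moreover have "0 < S * G + 1" by (intro add_nonneg_pos mult_nonneg_nonneg S G) simp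
  ultimately show ?thesis by blast
qed

lemma real_mat_carrier_mat: "X \<in> carrier_mat a b \<Longrightarrow> real_mat X \<in> carrier_mat a b"
  unfolding real_mat_def by auto

theorem theorem3:
  fixes L M N Mc Nc :: nat
    and \<tau> \<tau>c :: "nat \<Rightarrow> real"
    and QD QDc A Ac :: "complex mat"
    and TFQ TFA TCQ TCA :: "real mat"
  assumes "0 < L" "0 < M" "0 < N" "0 < Mc" "0 < Nc" "Mc \<le> M" "Nc \<le> N"
    and "right_radau_nodes M \<tau>" and "right_radau_nodes Mc \<tau>c"
    and "LU_trick (coll_matrix M \<tau>) QD" and "LU_trick (coll_matrix Mc \<tau>c) QDc"
    and "A \<in> carrier_mat N N" and "Ac \<in> carrier_mat Nc Nc"
    and "invertible_mat A" and "invertible_mat Ac"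
    and "TFQ \<in> carrier_mat Mc M" and "TFA \<in> carrier_mat Nc N"
    and "TCQ \<in> carrier_mat M Mc" and "TCA \<in> carrier_mat N Nc"
    and "kron (subdiag L) (kron (last_col_ones Mc) (1\<^sub>m Nc))
           * kron (1\<^sub>m L) (kron (real_mat TFQ) (real_mat TFA))
         = kron (1\<^sub>m L) (kron (real_mat TFQ) (real_mat TFA))
           * kron (subdiag L) (kron (last_col_ones M) (1\<^sub>m N))"
  shows "\<forall>k \<ge> M. \<exists>\<mu>s > 0. \<exists>c > 0. \<forall>\<mu> :: real. \<mu> > \<mu>s \<longrightarrow>
    (let Q = coll_matrix M \<tau>;
         H = kron (last_col_ones M) (1\<^sub>m N);
         Hc = kron (last_col_ones Mc) (1\<^sub>m Nc);
         E = subdiag L;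
         C = 1\<^sub>m (L * M * N) - complex_of_real \<mu> \<cdot>\<^sub>m kron (1\<^sub>m L) (kron Q A) - kron E H;
         Ph = 1\<^sub>m (L * M * N) - complex_of_real \<mu> \<cdot>\<^sub>m kron (1\<^sub>m L) (kron QD A);
         Pc = 1\<^sub>m (L * Mc * Nc) - complex_of_real \<mu> \<cdot>\<^sub>m kron (1\<^sub>m L) (kron QDc Ac) - kron E Hc;
         TFC = kron (1\<^sub>m L) (kron (real_mat TFQ) (real_mat TFA));
         TCF = kron (1\<^sub>m L) (kron (real_mat TCQ) (real_mat TCA));
         TS = 1\<^sub>m (L * M * N) - mat_inv Ph * C;
         TCGC = 1\<^sub>m (L * M * N) - TCF * mat_inv Pc * TFC * C
     in invertible_mat Ph \<longrightarrow> invertible_mat Pc \<longrightarrow>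
        spectral_radius (TS ^\<^sub>m k * TCGC) \<le> c / \<mu>)"
proof -
  note nodes = assms(8,9)[THEN right_radau_nodes_increasing]
  obtain Dinv where Dinv: "Dinv \<in> carrier_mat (L * M * N) (L * M * N)"
      "Dinv * kron (1\<^sub>m L) (kron QD A) = 1\<^sub>m (L * M * N)"
      "\<And>k. M \<le> k \<Longrightarrow> (1\<^sub>m (L * M * N) - Dinv * kron (1\<^sub>m L) (kron (coll_matrix M \<tau>) A)) ^\<^sub>m k
         = 0\<^sub>m (L * M * N) (L * M * N)"
    using LU_preconditioner_left_inverse[OF nodes(1) assms(10,12,14,3), where L = L] by blast
  obtain Dcinv where Dcinv: "Dcinv \<in> carrier_mat (L * Mc * Nc) (L * Mc * Nc)"
      "Dcinv * kron (1\<^sub>m L) (kron QDc Ac) = 1\<^sub>m (L * Mc * Nc)"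
    using LU_preconditioner_left_inverse[OF nodes(2) assms(11,13,15,5), where L = L] by blast
  have last_col_ones: "last_col_ones K \<in> carrier_mat K K" for K unfolding last_col_ones_def by simp
  have carriers:
    "kron (1\<^sub>m L) (kron QD A) \<in> carrier_mat (L * M * N) (L * M * N)"
    "kron (1\<^sub>m L) (kron (coll_matrix M \<tau>) A) \<in> carrier_mat (L * M * N) (L * M * N)"
    "kron (subdiag L) (kron (last_col_ones M) (1\<^sub>m N)) \<in> carrier_mat (L * M * N) (L * M * N)"
    "kron (1\<^sub>m L) (kron QDc Ac) \<in> carrier_mat (L * Mc * Nc) (L * Mc * Nc)"
    "kron (subdiag L) (kron (last_col_ones Mc) (1\<^sub>m Nc)) \<in> carrier_mat (L * Mc * Nc) (L * Mc * Nc)"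
    "kron (1\<^sub>m L) (kron (real_mat TCQ) (real_mat TCA)) \<in> carrier_mat (L * M * N) (L * Mc * Nc)"
    "kron (1\<^sub>m L) (kron (real_mat TFQ) (real_mat TFA)) \<in> carrier_mat (L * Mc * Nc) (L * M * N)"
    unfolding mult.assoc
    by (intro kron_carrier_mat one_carrier_mat last_col_ones real_mat_carrier_mat
        LU_trick_carrier_mat[OF assms(10)] LU_trick_carrier_mat[OF assms(11)] assms(12,13,16-19);
        simp add: coll_matrix_def subdiag_def)+
  show ?thesis
    unfolding Let_def
    by (intro allI impI two_level_spectral_radius_le[OF _ carriers(1-3) Dinv(1) carriers(4,5) Dcinv(1)
          carriers(6,7) Dinv(2) Dcinv(2) Dinv(3)])
      (use assms(1-3) in simp_all)
qed

end
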